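(* Let $G=(V,E)$ be a graph on $n$ vertices such that $\deg(u)+\deg(v)\geq n+d-2$ for all pairs of distinct non-adjacent vertices $u,v$. If there is a vertex $w\in V$ such that every pair of non-adjacent vertices $u,v\in N_G(w)$ is $\mathcal{R}_d$-linked in $G$, then $G$ is rigid in $\mathbb{R}^d$.
   Context: A graph is rigid in $\mathbb{R}^d$ if some (equivalently every) generic $d$-dimensional bar-and-joint framework of it (coordinates algebraically independent over $\mathbb{Q}$) admits no continuous edge-length-preserving motion changing some pairwise distance. $r_d$ is the rank function of the $d$-dimensional generic rigidity matroid on edge sets (linear independence of rows of the rigidity matrix of a generic framework); a non-adjacent pair $\{u,v\}$ is $\mathcal{R}_d$-linked in $G$ if $r_d(G+uv)=r_d(G)$. *)

theory Defs
  imports "HOL-Analysis.Analysis"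
begin

definition simple_graph :: "'a set \<Rightarrow> 'a set set \<Rightarrow> bool" where
  "simple_graph V E \<longleftrightarrow> finite V \<and> (\<forall>e\<in>E. \<exists>u v. e = {u, v} \<and> u \<in> V \<and> v \<in> V \<and> u \<noteq> v)"

definition degree :: "'a set \<Rightarrow> 'a set set \<Rightarrow> 'a \<Rightarrow> nat" where
  "degree V E v = card {u \<in> V. {u, v} \<in> E}"

definition neighbourhood :: "'a set \<Rightarrow> 'a set set \<Rightarrow> 'a \<Rightarrow> 'a set" where
  "neighbourhood V E w = {u \<in> V. {u, w} \<in> E}"

text \<open>A polynomial with rational coefficients is a finitely supported coefficient function on
  monomials; a monomial is an exponent function m with support in X.\<close>
definition alg_indep_rat :: "'b set \<Rightarrow> ('b \<Rightarrow> real) \<Rightarrow> bool" where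
  "alg_indep_rat X f \<longleftrightarrow>
     (\<forall>c :: ('b \<Rightarrow> nat) \<Rightarrow> rat.
        finite {m. c m \<noteq> 0} \<and> (\<forall>m. c m \<noteq> 0 \<longrightarrow> (\<forall>x. m x \<noteq> 0 \<longrightarrow> x \<in> X)) \<and>
        (\<Sum>m\<in>{m. c m \<noteq> 0}. of_rat (c m) * (\<Prod>x\<in>X. f x ^ m x)) = 0
        \<longrightarrow> (\<forall>m. c m = 0))"

text \<open>A d-dimensional framework assigns to each vertex v the point p v, with coordinates
  p v i for i < d. It is generic if its coordinates are algebraically independent over Q.\<close>
definition generic :: "nat \<Rightarrow> 'a set \<Rightarrow> ('a \<Rightarrow> nat \<Rightarrow> real) \<Rightarrow> bool" where
  "generic d V p \<longleftrightarrow> alg_indep_rat (V \<times> {..<d}) (\<lambda>(v, i). p v i)"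

definition sqdist :: "nat \<Rightarrow> (nat \<Rightarrow> real) \<Rightarrow> (nat \<Rightarrow> real) \<Rightarrow> real" where
  "sqdist d x y = (\<Sum>i<d. (x i - y i)^2)"

definition flexible_framework :: "nat \<Rightarrow> 'a set \<Rightarrow> 'a set set \<Rightarrow> ('a \<Rightarrow> nat \<Rightarrow> real) \<Rightarrow> bool" where
  "flexible_framework d V E p \<longleftrightarrow>
     (\<exists>q :: real \<Rightarrow> 'a \<Rightarrow> nat \<Rightarrow> real.
        (\<forall>v\<in>V. \<forall>i<d. continuous_on {0..1} (\<lambda>t. q t v i)) \<and>
        (\<forall>v\<in>V. \<forall>i<d. q 0 v i = p v i) \<and>
        (\<forall>t\<in>{0..1}. \<forall>u\<in>V. \<forall>v\<in>V. {u, v} \<in> E \<longrightarrow> sqdist d (q t u) (q t v) = sqdist d (p u) (p v)) \<and>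
        (\<exists>t\<in>{0..1}. \<exists>u\<in>V. \<exists>v\<in>V. sqdist d (q t u) (q t v) \<noteq> sqdist d (p u) (p v)))"

definition rigid :: "nat \<Rightarrow> 'a set \<Rightarrow> 'a set set \<Rightarrow> bool" where
  "rigid d V E \<longleftrightarrow> (\<forall>p. generic d V p \<longrightarrow> \<not> flexible_framework d V E p)"

text \<open>Row of the rigidity matrix for the edge {u,v}; columns indexed by (vertex x, coordinate j).\<close>
definition rig_row :: "nat \<Rightarrow> ('a \<Rightarrow> nat \<Rightarrow> real) \<Rightarrow> 'a set \<Rightarrow> 'a \<Rightarrow> nat \<Rightarrow> real" where
  "rig_row d p e x j =
     (if x \<in> e \<and> j < d then p x j - p (THE y. e = {x, y}) j else 0)"

definition rows_indep :: "nat \<Rightarrow> ('a \<Rightarrow> nat \<Rightarrow> real) \<Rightarrow> 'a set set \<Rightarrow> bool" where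
  "rows_indep d p F \<longleftrightarrow> finite F \<and>
     (\<forall>c :: 'a set \<Rightarrow> real. (\<forall>x j. (\<Sum>e\<in>F. c e * rig_row d p e x j) = 0) \<longrightarrow> (\<forall>e\<in>F. c e = 0))"

definition rig_rank :: "nat \<Rightarrow> ('a \<Rightarrow> nat \<Rightarrow> real) \<Rightarrow> 'a set set \<Rightarrow> nat" where
  "rig_rank d p F = Max (card ` {F'. F' \<subseteq> F \<and> rows_indep d p F'})"

definition rank_d :: "nat \<Rightarrow> 'a set \<Rightarrow> 'a set set \<Rightarrow> nat" where
  "rank_d d V F = rig_rank d (SOME p. generic d V p) F"

definition R_linked :: "nat \<Rightarrow> 'a set \<Rightarrow> 'a set set \<Rightarrow> 'a \<Rightarrow> 'a \<Rightarrow> bool" where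
  "R_linked d V E u v \<longleftrightarrow> rank_d d V (insert {u, v} E) = rank_d d V E"

end

theory Submission
  imports Defs "Jordan_Normal_Form.Determinant"
begin

text \<open>Linear independence of a set of rows of the rigidity matrix is the nonvanishing of their
  Gram determinant, a rational polynomial in the coordinates; so rows independent at some framework
  are independent at every generic one, and r_d can be computed at any generic framework p.

  Fix a generic p and choose E0 \<subseteq> E whose rows form a basis of the rows of E. An infinitesimal
  motion of E0 is then one of E and, by R_d-linkedness, preserves every pair inside N(w); hence it
  is trivial on w together with N(w). By the degree condition every other vertex x has d common
  neighbours with w, and by genericity these are affinely independent together with x and together
  with w; this forces the motion to be trivial everywhere. So E0 is a basis of the rigidity matroid
  of the complete graph on V: the framework is infinitesimally rigid.

  Infinitesimal rigidity gives rigidity: along a motion q, the set of times t at which q t is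
  congruent to p is closed, and it is open because q s - q t is an infinitesimal motion of the
  midpoint framework (q s + q t) / 2, which is still infinitesimally rigid for s near t. Hence
  the set is all of [0, 1].\<close>

section \<open>Rational polynomials in the coordinates of a framework\<close>

definition monomial_val :: "('a \<times> nat) set \<Rightarrow> ('a \<Rightarrow> nat \<Rightarrow> real) \<Rightarrow> ('a \<times> nat \<Rightarrow> nat) \<Rightarrow> real" where
  "monomial_val X q m = (\<Prod>x\<in>X. (\<lambda>(v, i). q v i) x ^ m x)"

definition rat_polynomial_fun :: "('a \<times> nat) set \<Rightarrow> (('a \<Rightarrow> nat \<Rightarrow> real) \<Rightarrow> real) \<Rightarrow> bool" where
  "rat_polynomial_fun X F \<longleftrightarrow> (\<exists>S c. finite S \<and> (\<forall>m\<in>S. \<forall>x. m x \<noteq> 0 \<longrightarrow> x \<in> X) \<and>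
      (\<forall>q. F q = (\<Sum>m\<in>S. of_rat (c m) * monomial_val X q m)))"

lemma rat_polynomial_fun_const: "rat_polynomial_fun X (\<lambda>q. of_rat r)"
  unfolding rat_polynomial_fun_def
  by (rule exI[of _ "{\<lambda>_. 0}"], rule exI[of _ "\<lambda>_. r"]) (auto simp: monomial_val_def)

lemma rat_polynomial_fun_var:
  assumes "finite X" "(v, i) \<in> X"
  shows "rat_polynomial_fun X (\<lambda>q. q v i)"
  unfolding rat_polynomial_fun_def
proof (intro exI[of _ "{\<lambda>x. if x = (v, i) then 1 else 0}"] exI[of _ "\<lambda>_. 1"] conjI allI)
  fix q :: "'a \<Rightarrow> nat \<Rightarrow> real"
  have "monomial_val X q (\<lambda>x. if x = (v, i) then 1 else 0) =
        (\<Prod>x\<in>X. if x = (v, i) then (\<lambda>(v, i). q v i) x else 1)"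
    unfolding monomial_val_def by (rule prod.cong) auto
  also have "\<dots> = q v i"
    using assms by (subst prod.delta) auto
  finally show "q v i = (\<Sum>m\<in>{\<lambda>x. if x = (v, i) then 1 else 0}. of_rat 1 * monomial_val X q m)"
    by simp
qed (use assms in auto)

lemma rat_polynomial_fun_add:
  assumes "rat_polynomial_fun X F" "rat_polynomial_fun X G"
  shows "rat_polynomial_fun X (\<lambda>q. F q + G q)"
proof -
  obtain S1 c1 where S1: "finite S1" "\<forall>m\<in>S1. \<forall>x. m x \<noteq> 0 \<longrightarrow> x \<in> X"
    and F: "\<And>q. F q = (\<Sum>m\<in>S1. of_rat (c1 m) * monomial_val X q m)"
    using assms(1) unfolding rat_polynomial_fun_def by blast
  obtain S2 c2 where S2: "finite S2" "\<forall>m\<in>S2. \<forall>x. m x \<noteq> 0 \<longrightarrow> x \<in> X"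
    and G: "\<And>q. G q = (\<Sum>m\<in>S2. of_rat (c2 m) * monomial_val X q m)"
    using assms(2) unfolding rat_polynomial_fun_def by blast
  define c where "c m = (if m \<in> S1 then c1 m else 0) + (if m \<in> S2 then c2 m else 0)" for m
  show ?thesis
    unfolding rat_polynomial_fun_def
  proof (intro exI[of _ "S1 \<union> S2"] exI[of _ c] conjI allI)
    fix q
    have "(\<Sum>m\<in>S1 \<union> S2. of_rat (if m \<in> S1 then c1 m else 0) * monomial_val X q m) = F q"
      unfolding F by (rule sum.mono_neutral_cong_right) (use S1 S2 in auto)
    moreover have "(\<Sum>m\<in>S1 \<union> S2. of_rat (if m \<in> S2 then c2 m else 0) * monomial_val X q m) = G q"
      unfolding G by (rule sum.mono_neutral_cong_right) (use S1 S2 in auto)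
    ultimately show "F q + G q = (\<Sum>m\<in>S1 \<union> S2. of_rat (c m) * monomial_val X q m)"
      unfolding c_def of_rat_add distrib_right sum.distrib by simp
  qed (use S1 S2 in auto)
qed

lemma rat_polynomial_fun_uminus:
  assumes "rat_polynomial_fun X F"
  shows "rat_polynomial_fun X (\<lambda>q. - F q)"
proof -
  obtain S c where "finite S" "\<forall>m\<in>S. \<forall>x. m x \<noteq> 0 \<longrightarrow> x \<in> X"
    "\<forall>q. F q = (\<Sum>m\<in>S. of_rat (c m) * monomial_val X q m)"
    using assms unfolding rat_polynomial_fun_def by blast
  then show ?thesis
    unfolding rat_polynomial_fun_def
    by (intro exI[of _ S] exI[of _ "\<lambda>m. - c m"]) (auto simp: of_rat_minus sum_negf)
qed

lemma rat_polynomial_fun_diff: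
  "rat_polynomial_fun X F \<Longrightarrow> rat_polynomial_fun X G \<Longrightarrow> rat_polynomial_fun X (\<lambda>q. F q - G q)"
  using rat_polynomial_fun_add[OF _ rat_polynomial_fun_uminus] by fastforce

lemma monomial_val_add:
  "finite X \<Longrightarrow> monomial_val X q (\<lambda>x. a x + b x) = monomial_val X q a * monomial_val X q b"
  unfolding monomial_val_def by (simp add: power_add prod.distrib)

lemma rat_polynomial_fun_mult:
  assumes "finite X" "rat_polynomial_fun X F" "rat_polynomial_fun X G"
  shows "rat_polynomial_fun X (\<lambda>q. F q * G q)"
proof -
  obtain S1 c1 where S1: "finite S1" "\<forall>m\<in>S1. \<forall>x. m x \<noteq> 0 \<longrightarrow> x \<in> X"
    and F: "\<And>q. F q = (\<Sum>m\<in>S1. of_rat (c1 m) * monomial_val X q m)"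
    using assms(2) unfolding rat_polynomial_fun_def by blast
  obtain S2 c2 where S2: "finite S2" "\<forall>m\<in>S2. \<forall>x. m x \<noteq> 0 \<longrightarrow> x \<in> X"
    and G: "\<And>q. G q = (\<Sum>m\<in>S2. of_rat (c2 m) * monomial_val X q m)"
    using assms(3) unfolding rat_polynomial_fun_def by blast
  define plus where "plus = (\<lambda>(a :: 'a \<times> nat \<Rightarrow> nat, b). (\<lambda>x. a x + b x))"
  define S where "S = plus ` (S1 \<times> S2)"
  define c where "c m = (\<Sum>z\<in>{z \<in> S1 \<times> S2. plus z = m}. c1 (fst z) * c2 (snd z))" for m
  show ?thesis
    unfolding rat_polynomial_fun_def
  proof (intro exI[of _ S] exI[of _ c] conjI allI)
    show "finite S" "\<forall>m\<in>S. \<forall>x. m x \<noteq> 0 \<longrightarrow> x \<in> X"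
      unfolding S_def plus_def using S1 S2 by fastforce+
    fix q
    let ?g = "\<lambda>z. of_rat (c1 (fst z) * c2 (snd z)) * monomial_val X q (plus z)"
    have "F q * G q = (\<Sum>z\<in>S1 \<times> S2. ?g z)"
      using assms(1) unfolding F G sum_product sum.cartesian_product
      by (intro sum.cong) (auto simp: plus_def monomial_val_add of_rat_mult mult_ac)
    also have "\<dots> = (\<Sum>m\<in>S. \<Sum>z\<in>{z \<in> S1 \<times> S2. plus z = m}. ?g z)"
      by (rule sum.group[symmetric]) (use S1 S2 in \<open>auto simp: S_def\<close>)
    also have "\<dots> = (\<Sum>m\<in>S. of_rat (c m) * monomial_val X q m)"
      unfolding c_def of_rat_sum sum_distrib_right by (intro sum.cong) auto
    finally show "F q * G q = (\<Sum>m\<in>S. of_rat (c m) * monomial_val X q m)" .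
  qed
qed

lemma rat_polynomial_fun_sum:
  assumes "finite I" "\<And>i. i \<in> I \<Longrightarrow> rat_polynomial_fun X (F i)"
  shows "rat_polynomial_fun X (\<lambda>q. \<Sum>i\<in>I. F i q)"
  using assms
proof (induction I rule: finite_induct)
  case empty
  then show ?case using rat_polynomial_fun_const[of X 0] by simp
next
  case (insert a I)
  then show ?case by (simp add: rat_polynomial_fun_add)
qed

lemma rat_polynomial_fun_prod:
  assumes "finite X" "finite I" "\<And>i. i \<in> I \<Longrightarrow> rat_polynomial_fun X (F i)"
  shows "rat_polynomial_fun X (\<lambda>q. \<Prod>i\<in>I. F i q)"
  using assms(2,3)
proof (induction I rule: finite_induct)
  case empty
  then show ?case using rat_polynomial_fun_const[of X 1] by simp
next
  case (insert a I)
  then show ?case by (simp add: rat_polynomial_fun_mult[OF assms(1)])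
qed

lemma rat_polynomial_fun_det:
  assumes X: "finite X" and f: "\<And>i l. i < k \<Longrightarrow> l < k \<Longrightarrow> rat_polynomial_fun X (f i l)"
  shows "rat_polynomial_fun X (\<lambda>q. Determinant.det (Matrix.mat k k (\<lambda>(i, l). f i l q)))"
proof -
  have leibniz: "Determinant.det (Matrix.mat k k (\<lambda>(i, l). f i l q)) =
     (\<Sum>p\<in>{p. p permutes {0..<k}}. of_int (sign p) * (\<Prod>i\<in>{0..<k}. f i (p i) q))" for q
  proof -
    have "p i < k" if "p permutes {0..<k}" "i \<in> {0..<k}" for p i
      using permutes_in_image[OF that(1)] that(2) by simp
    then show ?thesis
      by (subst det_def'[of _ k]) (auto intro!: sum.cong prod.cong)
  qed
  have "rat_polynomial_fun X
          (\<lambda>q. \<Sum>p\<in>{p. p permutes {0..<k}}. of_int (sign p) * (\<Prod>i\<in>{0..<k}. f i (p i) q))"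
  proof (intro rat_polynomial_fun_sum rat_polynomial_fun_mult[OF X] rat_polynomial_fun_prod[OF X])
    show "finite {p. p permutes {0..<k}}"
      by (rule finite_permutations) simp
    show "rat_polynomial_fun X (\<lambda>q. of_int (sign p))" for p
      using rat_polynomial_fun_const[of X "of_int (sign p)"] by simp
    show "rat_polynomial_fun X (f i (p i))" if "p \<in> {p. p permutes {0..<k}}" "i \<in> {0..<k}" for p i
      using that by (auto intro: f dest: permutes_in_image)
  qed simp
  then show ?thesis
    by (simp add: leibniz)
qed

lemma rat_polynomial_fun_generic_zero:
  assumes "generic d V p" "rat_polynomial_fun (V \<times> {..<d}) F" "F p = 0"
  shows "F q = 0"
proof -
  let ?X = "V \<times> {..<d}"
  obtain S c where S: "finite S" "\<forall>m\<in>S. \<forall>x. m x \<noteq> 0 \<longrightarrow> x \<in> ?X"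
    and F: "\<And>q. F q = (\<Sum>m\<in>S. of_rat (c m) * monomial_val ?X q m)"
    using assms(2) unfolding rat_polynomial_fun_def by blast
  define c' where "c' m = (if m \<in> S then c m else 0)" for m
  have sub: "{m. c' m \<noteq> 0} \<subseteq> S"
    unfolding c'_def by auto
  have "(\<Sum>m\<in>{m. c' m \<noteq> 0}. of_rat (c' m) * (\<Prod>x\<in>?X. (\<lambda>(v, i). p v i) x ^ m x)) = F p"
    unfolding F by (rule sum.mono_neutral_cong_left) (use S sub in \<open>auto simp: c'_def monomial_val_def\<close>)
  then have "\<forall>m. c' m = 0"
    using assms(1) finite_subset[OF sub S(1)] S(2) sub
    unfolding generic_def alg_indep_rat_def assms(3) by blast
  then have "\<forall>m\<in>S. c m = 0"
    unfolding c'_def by metis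
  then show ?thesis
    unfolding F by simp
qed

lemma tendsto_rat_polynomial_fun:
  assumes "rat_polynomial_fun X F" "\<And>v i. (v, i) \<in> X \<Longrightarrow> ((\<lambda>n. Q n v i) \<longlongrightarrow> q v i) G"
  shows "((\<lambda>n. F (Q n)) \<longlongrightarrow> F q) G"
proof -
  obtain S c where "finite S" and F: "\<And>q. F q = (\<Sum>m\<in>S. of_rat (c m) * monomial_val X q m)"
    using assms(1) unfolding rat_polynomial_fun_def by blast
  have "((\<lambda>n. monomial_val X (Q n) m) \<longlongrightarrow> monomial_val X q m) G" for m
    unfolding monomial_val_def by (intro tendsto_prod tendsto_power) (use assms(2) in auto)
  then show ?thesis
    unfolding F by (intro tendsto_sum tendsto_mult tendsto_const)
qed

section \<open>The rigidity matrix\<close>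

definition pairs :: "'a set \<Rightarrow> 'a set set" where
  "pairs V = {{a, b} | a b. a \<in> V \<and> b \<in> V \<and> a \<noteq> b}"

lemma pairsI: "a \<in> V \<Longrightarrow> b \<in> V \<Longrightarrow> a \<noteq> b \<Longrightarrow> {a, b} \<in> pairs V"
  unfolding pairs_def by blast

lemma pairsE:
  assumes "e \<in> pairs V"
  obtains a b where "e = {a, b}" "a \<in> V" "b \<in> V" "a \<noteq> b"
  using assms unfolding pairs_def by blast

lemma finite_pairs: "finite V \<Longrightarrow> finite (pairs V)"
  by (rule finite_subset[of _ "Pow V"]) (auto simp: pairs_def)

lemma simple_graph_edges_pairs: "simple_graph V E \<Longrightarrow> E \<subseteq> pairs V"
  unfolding simple_graph_def pairs_def by blast

definition dot :: "nat \<Rightarrow> (nat \<Rightarrow> real) \<Rightarrow> (nat \<Rightarrow> real) \<Rightarrow> real" where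
  "dot d u w = (\<Sum>j<d. u j * w j)"

lemma dot_commute: "dot d u w = dot d w u"
  unfolding dot_def by (simp add: mult.commute)

lemma dot_diff_left: "dot d (\<lambda>j. u j - v j) w = dot d u w - dot d v w"
  unfolding dot_def by (simp add: left_diff_distrib sum_subtractf)

lemma dot_diff_right: "dot d w (\<lambda>j. u j - v j) = dot d w u - dot d w v"
  unfolding dot_def by (simp add: right_diff_distrib sum_subtractf)

lemma dot_sum_left:
  "finite I \<Longrightarrow> dot d (\<lambda>j. \<Sum>i\<in>I. c i * u i j) w = (\<Sum>i\<in>I. c i * dot d (u i) w)"
  unfolding dot_def by (simp add: sum_distrib_left sum_distrib_right mult_ac sum.swap[of _ I])

lemma dot_cong:
  "(\<And>j. j < d \<Longrightarrow> u j = u' j) \<Longrightarrow> (\<And>j. j < d \<Longrightarrow> w j = w' j) \<Longrightarrow> dot d u w = dot d u' w'"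
  unfolding dot_def by (rule sum.cong) auto

lemma dot_diff_eq_sqdist:
  "dot d (\<lambda>j. x j - y j) (\<lambda>j. z j - u j) = (sqdist d x u + sqdist d y z - sqdist d x z - sqdist d y u) / 2"
proof -
  have "(sqdist d x u + sqdist d y z - sqdist d x z - sqdist d y u) / 2 =
        (\<Sum>j<d. ((x j - u j)\<^sup>2 + (y j - z j)\<^sup>2 - (x j - z j)\<^sup>2 - (y j - u j)\<^sup>2) / 2)"
    unfolding sqdist_def by (simp only: sum_divide_distrib[symmetric] sum.distrib sum_subtractf)
  also have "\<dots> = dot d (\<lambda>j. x j - y j) (\<lambda>j. z j - u j)"
    unfolding dot_def by (rule sum.cong) (simp_all add: field_simps power2_eq_square)
  finally show ?thesis
    by simp
qed

lemma rig_row_pair: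
  assumes "a \<noteq> b"
  shows "rig_row d q {a, b} x j =
           (if j < d then (of_bool (x = a) - of_bool (x = b)) * (q a j - q b j) else 0)"
proof -
  have "(THE y. {a, b} = {a, y}) = b" "(THE y. {a, b} = {b, y}) = a"
    by (auto intro!: the_equality simp: doubleton_eq_iff)
  then show ?thesis
    unfolding rig_row_def using assms by auto
qed

lemma rig_row_outside: "e \<in> pairs V \<Longrightarrow> x \<notin> V \<or> \<not> j < d \<Longrightarrow> rig_row d q e x j = 0"
  by (erule pairsE) (auto simp: rig_row_pair)

definition coord_inner :: "'a set \<Rightarrow> nat \<Rightarrow> ('a \<Rightarrow> nat \<Rightarrow> real) \<Rightarrow> ('a \<Rightarrow> nat \<Rightarrow> real) \<Rightarrow> real" where
  "coord_inner V d f g = (\<Sum>x\<in>V. \<Sum>j<d. f x j * g x j)"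

lemma coord_inner_commute: "coord_inner V d f g = coord_inner V d g f"
  unfolding coord_inner_def by (simp add: mult.commute)

lemma coord_inner_sum_right:
  "finite I \<Longrightarrow> coord_inner V d m (\<lambda>x j. \<Sum>i\<in>I. c i * r i x j) = (\<Sum>i\<in>I. c i * coord_inner V d m (r i))"
  unfolding coord_inner_def by (simp add: sum_distrib_left sum_distrib_right mult_ac sum.swap[of _ I])

lemma coord_inner_sum_left:
  "finite I \<Longrightarrow> coord_inner V d (\<lambda>x j. \<Sum>i\<in>I. c i * r i x j) m = (\<Sum>i\<in>I. c i * coord_inner V d (r i) m)"
  using coord_inner_sum_right[of I V d m c r] by (simp add: coord_inner_commute)

lemma coord_inner_self_eq_0D:
  assumes "finite V" "coord_inner V d f f = 0" "x \<in> V" "j < d"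
  shows "f x j = 0"
proof -
  have "\<forall>x\<in>V. (\<Sum>j<d. f x j * f x j) = 0"
    using assms(1,2) unfolding coord_inner_def by (subst (asm) sum_nonneg_eq_0_iff) (auto intro: sum_nonneg)
  then have "\<forall>j<d. f x j * f x j = 0"
    using assms(3) by (subst (asm) sum_nonneg_eq_0_iff) auto
  then show ?thesis
    using assms(4) by auto
qed

lemma coord_inner_rig_row:
  assumes "finite V" "a \<in> V" "b \<in> V" "a \<noteq> b"
  shows "coord_inner V d m (rig_row d r {a, b}) = dot d (\<lambda>j. m a j - m b j) (\<lambda>j. r a j - r b j)"
proof -
  have delta: "(\<Sum>x\<in>V. f x * of_bool (x = y)) = f y" if "y \<in> V" for f :: "'a \<Rightarrow> real" and y
  proof -
    have "(\<Sum>x\<in>V. f x * of_bool (x = y)) = (\<Sum>x\<in>V. if y = x then f x else 0)"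
      by (rule sum.cong) auto
    then show ?thesis
      using assms(1) that by simp
  qed
  have "(\<Sum>x\<in>V. m x j * ((of_bool (x = a) - of_bool (x = b)) * c)) = (m a j - m b j) * c" for j c
  proof -
    have "(\<Sum>x\<in>V. m x j * ((of_bool (x = a) - of_bool (x = b)) * c)) =
          ((\<Sum>x\<in>V. m x j * of_bool (x = a)) - (\<Sum>x\<in>V. m x j * of_bool (x = b))) * c"
      by (simp add: sum_distrib_right sum_subtractf right_diff_distrib left_diff_distrib mult.assoc)
    then show ?thesis
      using delta[OF assms(2)] delta[OF assms(3)] by simp
  qed
  then show ?thesis
    unfolding coord_inner_def dot_def using assms(4) by (subst sum.swap) (simp add: rig_row_pair)
qed

lemma coord_inner_rig_rows_sqdist:
  assumes "finite V" "a \<in> V" "b \<in> V" "a \<noteq> b" "c \<noteq> g"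
  shows "coord_inner V d (rig_row d q {c, g}) (rig_row d q {a, b}) =
    (of_bool (a = c) - of_bool (a = g) - of_bool (b = c) + of_bool (b = g)) *
    ((sqdist d (q c) (q b) + sqdist d (q g) (q a) - sqdist d (q c) (q a) - sqdist d (q g) (q b)) / 2)"
proof -
  have "coord_inner V d (rig_row d q {c, g}) (rig_row d q {a, b}) =
        (of_bool (a = c) - of_bool (a = g) - of_bool (b = c) + of_bool (b = g)) *
        dot d (\<lambda>j. q c j - q g j) (\<lambda>j. q a j - q b j)"
    unfolding coord_inner_rig_row[OF assms(1-4)] dot_def sum_distrib_left
    using assms(5) by (intro sum.cong refl) (simp add: rig_row_pair algebra_simps)
  then show ?thesis
    by (simp add: dot_diff_eq_sqdist)
qed

lemma rat_polynomial_fun_of_bool: "rat_polynomial_fun X (\<lambda>q. of_bool P)"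
  using rat_polynomial_fun_const[of X "of_bool P"] by (cases P) simp_all

lemma rat_polynomial_fun_rig_row:
  assumes "finite V" "e \<in> pairs V"
  shows "rat_polynomial_fun (V \<times> {..<d}) (\<lambda>q. rig_row d q e x j)"
proof -
  obtain a b where ab: "e = {a, b}" "a \<in> V" "b \<in> V" "a \<noteq> b"
    using assms(2) by (rule pairsE)
  have "rat_polynomial_fun (V \<times> {..<d})
          (\<lambda>q. if j < d then (of_bool (x = a) - of_bool (x = b)) * (q a j - q b j) else 0)"
  proof (cases "j < d")
    case True
    have "rat_polynomial_fun (V \<times> {..<d}) (\<lambda>q. (of_bool (x = a) - of_bool (x = b)) * (q a j - q b j))"
      by (intro rat_polynomial_fun_mult rat_polynomial_fun_diff rat_polynomial_fun_of_bool
          rat_polynomial_fun_var) (use assms(1) ab True in auto)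
    then show ?thesis
      using True by simp
  qed (use rat_polynomial_fun_of_bool[of _ False] in simp)
  then show ?thesis
    using ab by (simp add: rig_row_pair)
qed

lemma mat_mult_vec_index:
  "i < n \<Longrightarrow> v \<in> carrier_vec n \<Longrightarrow>
     vec_index (Matrix.mat n n f *\<^sub>v v) i = (\<Sum>l<n. f (i, l) * vec_index v l)"
  by (simp add: scalar_prod_def lessThan_atLeast0)

lemma det_nonzero_kernel_zero:
  assumes "Determinant.det (Matrix.mat n n (\<lambda>(i, l). M i l)) \<noteq> (0 :: real)"
    and "\<And>i. i < n \<Longrightarrow> (\<Sum>l<n. M i l * z l) = 0" and "j < n"
  shows "z j = 0"
proof -
  have "Matrix.mat n n (\<lambda>(i, l). M i l) *\<^sub>v Matrix.vec n z = 0\<^sub>v n"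
    using assms(2) by (intro eq_vecI) (auto simp: mat_mult_vec_index simp del: index_mult_mat_vec)
  then have "Matrix.vec n z = 0\<^sub>v n"
    using assms(1) det_0_iff_vec_prod_zero[OF mat_carrier, of n "\<lambda>(i, l). M i l"]
      vec_carrier[of n z] by blast
  then show ?thesis
    using assms(3) by (metis index_vec index_zero_vec(1))
qed

definition gram_mat :: "'a set \<Rightarrow> nat \<Rightarrow> (nat \<Rightarrow> 'a \<Rightarrow> nat \<Rightarrow> real) \<Rightarrow> nat \<Rightarrow> real mat" where
  "gram_mat V d r k = Matrix.mat k k (\<lambda>(i, l). coord_inner V d (r i) (r l))"

lemma gram_mat_mult_vec_index:
  "i < k \<Longrightarrow> v \<in> carrier_vec k \<Longrightarrow>
     vec_index (gram_mat V d r k *\<^sub>v v) i = coord_inner V d (r i) (\<lambda>x j. \<Sum>l<k. vec_index v l * r l x j)"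
  unfolding gram_mat_def
  by (simp add: mat_mult_vec_index coord_inner_sum_right mult.commute del: index_mult_mat_vec)

lemma det_gram_mat_nonzero_iff:
  fixes r :: "nat \<Rightarrow> 'a \<Rightarrow> nat \<Rightarrow> real"
  assumes V: "finite V" and supp: "\<And>i x j. i < k \<Longrightarrow> x \<notin> V \<or> \<not> j < d \<Longrightarrow> r i x j = 0"
  shows "Determinant.det (gram_mat V d r k) \<noteq> 0 \<longleftrightarrow>
         (\<forall>c. (\<forall>x j. (\<Sum>i<k. c i * r i x j) = 0) \<longrightarrow> (\<forall>i<k. c i = 0))"
proof (intro iffI allI impI)
  fix c i assume det: "Determinant.det (gram_mat V d r k) \<noteq> 0"
    and c: "\<forall>x j. (\<Sum>i<k. c i * r i x j) = 0" and i: "i < k"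
  have "(\<Sum>l<k. coord_inner V d (r i) (r l) * c l) = 0" for i
  proof -
    have "(\<Sum>l<k. coord_inner V d (r i) (r l) * c l) = coord_inner V d (r i) (\<lambda>x j. \<Sum>l<k. c l * r l x j)"
      by (simp add: coord_inner_sum_right mult.commute)
    then show ?thesis
      using c by (simp add: coord_inner_def)
  qed
  then show "c i = 0"
    using det_nonzero_kernel_zero[of k "\<lambda>i l. coord_inner V d (r i) (r l)"] det i
    unfolding gram_mat_def by blast
next
  assume indep: "\<forall>c. (\<forall>x j. (\<Sum>i<k. c i * r i x j) = 0) \<longrightarrow> (\<forall>i<k. c i = 0)"
  show "Determinant.det (gram_mat V d r k) \<noteq> 0"
  proof
    assume "Determinant.det (gram_mat V d r k) = 0"
    then obtain v where v: "v \<in> carrier_vec k" "v \<noteq> 0\<^sub>v k" "gram_mat V d r k *\<^sub>v v = 0\<^sub>v k"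
      using det_0_iff_vec_prod_zero[of "gram_mat V d r k" k] by (auto simp: gram_mat_def)
    define s where "s = (\<lambda>x j. \<Sum>l<k. vec_index v l * r l x j)"
    have "coord_inner V d s s = (\<Sum>i<k. vec_index v i * coord_inner V d (r i) s)"
      unfolding s_def by (rule coord_inner_sum_left) simp
    also have "\<dots> = (\<Sum>i<k. vec_index v i * vec_index (gram_mat V d r k *\<^sub>v v) i)"
      using v(1) by (intro sum.cong refl) (simp add: gram_mat_mult_vec_index s_def)
    also have "\<dots> = 0"
      using v(3) by simp
    finally have "s x j = 0" for x j
      using coord_inner_self_eq_0D[OF V] supp by (cases "x \<in> V \<and> j < d") (auto simp: s_def)
    then have "\<forall>i<k. vec_index v i = 0"
      using indep unfolding s_def by blast
    then show False
      using v(1,2) by (metis eq_vecI carrier_vecD index_zero_vec)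
  qed
qed

lemma rows_indep_iff_enum:
  fixes h :: "nat \<Rightarrow> 'a set"
  assumes h: "bij_betw h {0..<k} F"
  shows "rows_indep d q F \<longleftrightarrow>
         (\<forall>c. (\<forall>x j. (\<Sum>i<k. c i * rig_row d q (h i) x j) = 0) \<longrightarrow> (\<forall>i<k. c i = 0))"
proof -
  have reindex: "(\<Sum>e\<in>F. c e * rig_row d q e x j) = (\<Sum>i<k. c (h i) * rig_row d q (h i) x j)" for c x j
    using sum.reindex_bij_betw[OF h, of "\<lambda>e. c e * rig_row d q e x j"] by (simp add: lessThan_atLeast0)
  have inv: "inv_into {0..<k} h (h i) = i" "h i \<in> F" if "i < k" for i
    using h that by (auto simp: bij_betw_def)
  have surj: "\<exists>i<k. e = h i" if "e \<in> F" for e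
    using h that by (auto simp: bij_betw_def)
  show ?thesis
    unfolding rows_indep_def reindex
  proof (intro iffI allI impI conjI)
    fix c :: "nat \<Rightarrow> real" and i
    assume "finite F \<and> (\<forall>c. (\<forall>x j. (\<Sum>i<k. c (h i) * rig_row d q (h i) x j) = 0) \<longrightarrow> (\<forall>e\<in>F. c e = 0))"
      and "\<forall>x j. (\<Sum>i<k. c i * rig_row d q (h i) x j) = 0" and "i < k"
    then have "\<forall>e\<in>F. c (inv_into {0..<k} h e) = 0"
      using inv by (auto dest!: spec[of _ "\<lambda>e. c (inv_into {0..<k} h e)"])
    then show "c i = 0"
      using inv \<open>i < k\<close> by metis
  next
    show "finite F"
      using h bij_betw_finite by blast
  next
    fix c :: "'a set \<Rightarrow> real"
    assume indep: "\<forall>c. (\<forall>x j. (\<Sum>i<k. c i * rig_row d q (h i) x j) = 0) \<longrightarrow> (\<forall>i<k. c i = 0)"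
      and "\<forall>x j. (\<Sum>i<k. c (h i) * rig_row d q (h i) x j) = 0"
    then have "\<forall>i<k. c (h i) = 0"
      using spec[OF indep, of "\<lambda>i. c (h i)"] by blast
    then show "\<forall>e\<in>F. c e = 0"
      using surj by blast
  qed
qed

lemma rows_indep_iff_det_gram:
  assumes "finite V" "F \<subseteq> pairs V" "bij_betw h {0..<k} F"
  shows "rows_indep d q F \<longleftrightarrow> Determinant.det (gram_mat V d (\<lambda>i. rig_row d q (h i)) k) \<noteq> 0"
proof -
  have h_pairs: "h i \<in> pairs V" if "i < k" for i
    using assms(2,3) that by (meson atLeastLessThan_iff bij_betwE subsetD zero_le)
  have outside: "rig_row d q (h i) x j = 0" if "i < k" "x \<notin> V \<or> \<not> j < d" for i x j
    using rig_row_outside[OF h_pairs[OF that(1)] that(2)] .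
  show ?thesis
    using rows_indep_iff_enum[OF assms(3)]
      det_gram_mat_nonzero_iff[where r = "\<lambda>i. rig_row d q (h i)" and k = k and d = d, OF assms(1) outside]
    by simp
qed

lemma rat_polynomial_fun_det_gram:
  assumes "finite V" "\<And>i. i < k \<Longrightarrow> h i \<in> pairs V"
  shows "rat_polynomial_fun (V \<times> {..<d}) (\<lambda>q. Determinant.det (gram_mat V d (\<lambda>i. rig_row d q (h i)) k))"
  unfolding gram_mat_def coord_inner_def using assms
  by (intro rat_polynomial_fun_det rat_polynomial_fun_sum rat_polynomial_fun_mult rat_polynomial_fun_rig_row)
     auto

lemma rows_indep_generic:
  assumes gen: "generic d V p" and V: "finite V" and F: "F \<subseteq> pairs V" and indep: "rows_indep d q F"
  shows "rows_indep d p F"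
proof -
  obtain h where h: "bij_betw h {0..<card F} F"
    using indep ex_bij_betw_nat_finite unfolding rows_indep_def by blast
  have "h i \<in> pairs V" if "i < card F" for i
    using h F that by (meson atLeastLessThan_iff bij_betwE subsetD zero_le)
  then show ?thesis
    using rows_indep_iff_det_gram[OF V F h] indep
      rat_polynomial_fun_generic_zero[OF gen rat_polynomial_fun_det_gram[OF V]] by metis
qed

lemma rank_d_eq_rig_rank:
  assumes "generic d V p" "finite V" "F \<subseteq> pairs V"
  shows "rank_d d V F = rig_rank d p F"
proof -
  have "generic d V (SOME p. generic d V p)"
    using someI assms(1) by metis
  then have "{F'. F' \<subseteq> F \<and> rows_indep d (SOME p. generic d V p) F'} = {F'. F' \<subseteq> F \<and> rows_indep d p F'}"
    using rows_indep_generic[OF _ assms(2)] assms(1,3) by blast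
  then show ?thesis
    unfolding rank_d_def rig_rank_def by simp
qed

definition congruent_on :: "nat \<Rightarrow> 'a set \<Rightarrow> ('a \<Rightarrow> nat \<Rightarrow> real) \<Rightarrow> ('a \<Rightarrow> nat \<Rightarrow> real) \<Rightarrow> bool" where
  "congruent_on d V q q' \<longleftrightarrow> (\<forall>a\<in>V. \<forall>b\<in>V. sqdist d (q a) (q b) = sqdist d (q' a) (q' b))"

lemma coord_inner_rig_rows_congruent:
  assumes "finite V" "congruent_on d V q q'" "e \<in> pairs V" "f \<in> pairs V"
  shows "coord_inner V d (rig_row d q e) (rig_row d q f) = coord_inner V d (rig_row d q' e) (rig_row d q' f)"
proof -
  obtain c g where e: "e = {c, g}" "c \<in> V" "g \<in> V" "c \<noteq> g"
    using assms(3) by (rule pairsE)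
  obtain a b where f: "f = {a, b}" "a \<in> V" "b \<in> V" "a \<noteq> b"
    using assms(4) by (rule pairsE)
  show ?thesis
    using assms(2) e f unfolding congruent_on_def
    by (simp add: coord_inner_rig_rows_sqdist[OF assms(1) f(2-4) e(4)])
qed

lemma rows_indep_congruent:
  assumes V: "finite V" and "congruent_on d V q q'" and F: "F \<subseteq> pairs V"
  shows "rows_indep d q F \<longleftrightarrow> rows_indep d q' F"
proof -
  obtain h where h: "bij_betw h {0..<card F} F"
    using ex_bij_betw_nat_finite finite_subset[OF F finite_pairs[OF V]] by blast
  have "h i \<in> pairs V" if "i < card F" for i
    using h F that by (meson atLeastLessThan_iff bij_betwE subsetD zero_le)
  then have "gram_mat V d (\<lambda>i. rig_row d q (h i)) (card F) = gram_mat V d (\<lambda>i. rig_row d q' (h i)) (card F)"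
    unfolding gram_mat_def using coord_inner_rig_rows_congruent[OF V assms(2)] by (intro eq_matI) auto
  then show ?thesis
    using rows_indep_iff_det_gram[OF V F h] by metis
qed

section \<open>Infinitesimal motions\<close>

definition inf_motion :: "nat \<Rightarrow> 'a set \<Rightarrow> ('a \<Rightarrow> nat \<Rightarrow> real) \<Rightarrow> 'a set set \<Rightarrow> ('a \<Rightarrow> nat \<Rightarrow> real) \<Rightarrow> bool" where
  "inf_motion d V P F m \<longleftrightarrow> (\<forall>f\<in>F. coord_inner V d m (rig_row d P f) = 0)"

lemma inf_motion_dependent_row:
  assumes indep: "rows_indep d P F" and dep: "\<not> rows_indep d P (insert g F)"
    and m: "inf_motion d V P F m"
  shows "coord_inner V d m (rig_row d P g) = 0"
proof -
  have fin: "finite F" and g: "g \<notin> F"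
    using indep dep unfolding rows_indep_def by (auto simp: insert_absorb)
  obtain c where c: "\<forall>x j. (\<Sum>e\<in>insert g F. c e * rig_row d P e x j) = 0"
    and nonzero: "\<exists>e\<in>insert g F. c e \<noteq> 0"
    using dep fin unfolding rows_indep_def by auto
  have cg: "c g \<noteq> 0"
  proof
    assume "c g = 0"
    then have "\<forall>e\<in>F. c e = 0"
      using c fin g indep unfolding rows_indep_def by simp
    then show False
      using nonzero \<open>c g = 0\<close> by auto
  qed
  have "0 = coord_inner V d m (\<lambda>x j. \<Sum>e\<in>insert g F. c e * rig_row d P e x j)"
    using c unfolding coord_inner_def by simp
  also have "\<dots> = (\<Sum>e\<in>insert g F. c e * coord_inner V d m (rig_row d P e))"
    using fin by (intro coord_inner_sum_right) simp
  also have "\<dots> = c g * coord_inner V d m (rig_row d P g)"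
    using fin g m unfolding inf_motion_def by simp
  finally show ?thesis
    using cg by simp
qed

lemma exists_inf_motion_off_row:
  assumes V: "finite V" and F: "F \<subseteq> pairs V" and indep: "rows_indep d P F" and g: "g \<in> F"
  obtains m where "inf_motion d V P (F - {g}) m" "coord_inner V d m (rig_row d P g) \<noteq> 0"
proof -
  define k where "k = card F"
  obtain h where h: "bij_betw h {0..<k} F"
    using indep ex_bij_betw_nat_finite unfolding rows_indep_def k_def by blast
  let ?G = "gram_mat V d (\<lambda>i. rig_row d P (h i)) k"
  have G: "?G \<in> carrier_mat k k"
    unfolding gram_mat_def by simp
  have "Determinant.det ?G \<noteq> 0"
    using indep rows_indep_iff_det_gram[OF V F h] by blast
  then obtain B where B: "B \<in> carrier_mat k k" "?G * B = 1\<^sub>m k"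
    using det_non_zero_imp_unit[OF G] unfolding Units_def ring_mat_def by auto
  define l where "l = inv_into {0..<k} h g"
  have l: "l < k" "h l = g"
    using h g unfolding l_def by (auto simp: bij_betw_def inv_into_into f_inv_into_f)
  define a where "a = B *\<^sub>v unit_vec k l"
  have a: "a \<in> carrier_vec k" "?G *\<^sub>v a = unit_vec k l"
    unfolding a_def using B G by (auto simp flip: assoc_mult_mat_vec)
  define m where "m = (\<lambda>x j. \<Sum>i<k. vec_index a i * rig_row d P (h i) x j)"
  have dual: "coord_inner V d m (rig_row d P (h i)) = of_bool (i = l)" if "i < k" for i
  proof -
    have "coord_inner V d m (rig_row d P (h i)) = vec_index (?G *\<^sub>v a) i"
      unfolding m_def using that a(1) by (simp add: gram_mat_mult_vec_index coord_inner_commute)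
    then show ?thesis
      using that l(1) a(2) by simp
  qed
  show ?thesis
  proof
    show "inf_motion d V P (F - {g}) m"
      unfolding inf_motion_def
    proof
      fix f assume f: "f \<in> F - {g}"
      then have "f \<in> h ` {0..<k}"
        using h by (simp add: bij_betw_def)
      then obtain i where "i < k" "h i = f"
        by auto
      moreover have "i \<noteq> l" if "h i = f"
        using f l(2) that by auto
      ultimately show "coord_inner V d m (rig_row d P f) = 0"
        using dual by auto
    qed
    show "coord_inner V d m (rig_row d P g) \<noteq> 0"
      using dual[OF l(1)] l(2) by simp
  qed
qed

definition inf_preserves :: "nat \<Rightarrow> ('a \<Rightarrow> nat \<Rightarrow> real) \<Rightarrow> ('a \<Rightarrow> nat \<Rightarrow> real) \<Rightarrow> 'a \<Rightarrow> 'a \<Rightarrow> bool" where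
  "inf_preserves d P m a b \<longleftrightarrow> dot d (\<lambda>j. m a j - m b j) (\<lambda>j. P a j - P b j) = 0"

lemma inf_preserves_refl: "inf_preserves d P m a a"
  unfolding inf_preserves_def dot_def by simp

lemma inf_preserves_commute: "inf_preserves d P m a b \<longleftrightarrow> inf_preserves d P m b a"
  unfolding inf_preserves_def dot_def by (simp add: algebra_simps)

lemma inf_preserves_iff_coord_inner:
  "finite V \<Longrightarrow> a \<in> V \<Longrightarrow> b \<in> V \<Longrightarrow> a \<noteq> b \<Longrightarrow>
     inf_preserves d P m a b \<longleftrightarrow> coord_inner V d m (rig_row d P {a, b}) = 0"
  unfolding inf_preserves_def by (simp add: coord_inner_rig_row)

lemma dot_eq_0_det_nonzero:
  assumes "Determinant.det (Matrix.mat d d (\<lambda>(i, j). b i j)) \<noteq> 0"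
    and "\<And>i. i < d \<Longrightarrow> dot d (b i) z = 0" and "j < d"
  shows "z j = 0"
  using det_nonzero_kernel_zero[OF assms(1) _ assms(3)] assms(2) unfolding dot_def by blast

lemma exists_basis_coordinates:
  fixes b :: "nat \<Rightarrow> nat \<Rightarrow> real"
  assumes "Determinant.det (Matrix.mat d d (\<lambda>(i, j). b i j)) \<noteq> 0"
  obtains \<alpha> where "\<And>w l. l < d \<Longrightarrow> (\<Sum>i<d. \<alpha> w i * b i l) = w l"
    and "\<And>i l. i < d \<Longrightarrow> l < d \<Longrightarrow> \<alpha> (b l) i = of_bool (i = l)"
    and "\<And>v w i. \<alpha> (\<lambda>j. v j - w j) i = \<alpha> v i - \<alpha> w i"
proof -
  let ?B = "Matrix.mat d d (\<lambda>(i, j). b i j)"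
  have B: "?B \<in> carrier_mat d d"
    by simp
  obtain C where C: "C \<in> carrier_mat d d" "?B * C = 1\<^sub>m d" "C * ?B = 1\<^sub>m d"
    using det_non_zero_imp_unit[OF B assms] unfolding Units_def ring_mat_def by auto
  define \<alpha> where "\<alpha> w i = (\<Sum>j<d. C $$ (j, i) * w j)" for w i
  show ?thesis
  proof
    fix w l assume l: "l < d"
    have "(\<Sum>i<d. \<alpha> w i * b i l) = (\<Sum>j<d. w j * (\<Sum>i<d. C $$ (j, i) * ?B $$ (i, l)))"
      unfolding \<alpha>_def sum_distrib_left sum_distrib_right using l
      by (subst sum.swap) (simp add: mult_ac)
    also have "\<dots> = (\<Sum>j<d. w j * (C * ?B) $$ (j, l))"
      using C(1) l by (simp add: scalar_prod_def lessThan_atLeast0)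
    also have "\<dots> = (\<Sum>j<d. if j = l then w j else 0)"
      using C(3) l by (intro sum.cong refl) simp
    also have "\<dots> = w l"
      using l by simp
    finally show "(\<Sum>i<d. \<alpha> w i * b i l) = w l" .
  next
    fix i l assume "i < d" "l < d"
    then have "\<alpha> (b l) i = (?B * C) $$ (l, i)"
      using C(1) unfolding \<alpha>_def by (simp add: scalar_prod_def lessThan_atLeast0 mult.commute)
    then show "\<alpha> (b l) i = of_bool (i = l)"
      using C(2) \<open>i < d\<close> \<open>l < d\<close> by simp
  next
    show "\<alpha> (\<lambda>j. v j - w j) i = \<alpha> v i - \<alpha> w i" for v w i
      unfolding \<alpha>_def by (simp add: right_diff_distrib sum_subtractf)
  qed
qed

lemma sum_sum_antisym_eq_0:
  assumes "\<And>i l. i \<in> I \<Longrightarrow> l \<in> I \<Longrightarrow> s i l + s l i = (0 :: real)"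
  shows "(\<Sum>i\<in>I. \<Sum>l\<in>I. x i * x l * s i l) = 0"
proof -
  have "(\<Sum>i\<in>I. \<Sum>l\<in>I. x i * x l * s i l) = (\<Sum>l\<in>I. \<Sum>i\<in>I. x i * x l * s i l)"
    by (rule sum.swap)
  also have "\<dots> = (\<Sum>l\<in>I. \<Sum>i\<in>I. - (x l * x i * s l i))"
  proof (intro sum.cong refl)
    fix l i assume "l \<in> I" "i \<in> I"
    then have "s i l = - s l i"
      using assms by (simp add: eq_neg_iff_add_eq_0)
    then show "x i * x l * s i l = - (x l * x i * s l i)"
      by simp
  qed
  also have "\<dots> = - (\<Sum>l\<in>I. \<Sum>i\<in>I. x l * x i * s l i)"
    by (simp add: sum_negf)
  finally show ?thesis
    by simp
qed

lemma exists_skew_map: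
  fixes b u :: "nat \<Rightarrow> nat \<Rightarrow> real"
  assumes det: "Determinant.det (Matrix.mat d d (\<lambda>(i, j). b i j)) \<noteq> 0"
    and skew: "\<And>i l. i < d \<Longrightarrow> l < d \<Longrightarrow> dot d (u i) (b l) + dot d (u l) (b i) = 0"
  obtains A :: "(nat \<Rightarrow> real) \<Rightarrow> nat \<Rightarrow> real"
  where "\<And>v w j. A (\<lambda>j. v j - w j) j = A v j - A w j"
    and "\<And>i j. i < d \<Longrightarrow> A (b i) j = u i j"
    and "\<And>w. dot d (A w) w = 0"
proof -
  obtain \<alpha> where coords: "\<And>w l. l < d \<Longrightarrow> (\<Sum>i<d. \<alpha> w i * b i l) = w l"
    and basis: "\<And>i l. i < d \<Longrightarrow> l < d \<Longrightarrow> \<alpha> (b l) i = of_bool (i = l)"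
    and linear: "\<And>v w i. \<alpha> (\<lambda>j. v j - w j) i = \<alpha> v i - \<alpha> w i"
    using exists_basis_coordinates[OF det] by blast
  define A where "A w = (\<lambda>j. \<Sum>i<d. \<alpha> w i * u i j)" for w
  show ?thesis
  proof
    show "A (\<lambda>j. v j - w j) j = A v j - A w j" for v w j
      unfolding A_def linear by (simp add: left_diff_distrib sum_subtractf)
    show "A (b l) j = u l j" if "l < d" for l j
    proof -
      have "A (b l) j = (\<Sum>i<d. if i = l then u i j else 0)"
        unfolding A_def using that by (intro sum.cong refl) (simp add: basis)
      then show ?thesis
        using that by simp
    qed
    fix w
    have "dot d (A w) w = (\<Sum>i<d. \<alpha> w i * dot d (u i) (\<lambda>j. \<Sum>l<d. \<alpha> w l * b l j))"
      unfolding A_def by (simp add: dot_sum_left coords cong: dot_cong)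
    also have "\<dots> = (\<Sum>i<d. \<Sum>l<d. \<alpha> w i * \<alpha> w l * dot d (u i) (b l))"
      by (simp add: dot_commute[of d "u _"] dot_sum_left sum_distrib_left mult_ac)
    also have "\<dots> = 0"
      using skew by (intro sum_sum_antisym_eq_0) auto
    finally show "dot d (A w) w = 0" .
  qed
qed

lemma inf_preserves_sub_skew:
  assumes linear: "\<And>v w j. A (\<lambda>j. v j - w j) j = A v j - A w j"
    and skew: "\<And>w. dot d (A w) w = 0"
  shows "inf_preserves d P (\<lambda>v j. m v j - t j - A (\<lambda>j. P v j - c j) j) a b \<longleftrightarrow> inf_preserves d P m a b"
proof -
  have "A (\<lambda>j. P a j - c j) j - A (\<lambda>j. P b j - c j) j = A (\<lambda>j. P a j - P b j) j" for j
    using linear[of "\<lambda>j. P a j - c j" "\<lambda>j. P b j - c j" j] by simp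
  then have "dot d (\<lambda>j. (m a j - t j - A (\<lambda>j. P a j - c j) j) - (m b j - t j - A (\<lambda>j. P b j - c j) j))
               (\<lambda>j. P a j - P b j) =
             dot d (\<lambda>j. m a j - m b j) (\<lambda>j. P a j - P b j) - dot d (A (\<lambda>j. P a j - P b j)) (\<lambda>j. P a j - P b j)"
    by (simp add: dot_diff_left[symmetric] algebra_simps)
  then show ?thesis
    unfolding inf_preserves_def skew by simp
qed

text \<open>Subtract from m the trivial motion (a translation plus an infinitesimal rotation about P c)
  that agrees with it at c and at the k i.\<close>
lemma exists_normalised_inf_motion:
  fixes P m :: "'a \<Rightarrow> nat \<Rightarrow> real"
  assumes c: "c \<in> C" and k: "\<And>i. i < d \<Longrightarrow> k i \<in> C"
    and det: "Determinant.det (Matrix.mat d d (\<lambda>(i, j). P (k i) j - P c j)) \<noteq> 0"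
    and body: "\<And>x y. x \<in> C \<Longrightarrow> y \<in> C \<Longrightarrow> inf_preserves d P m x y"
  obtains \<delta> where "\<And>x y. inf_preserves d P \<delta> x y \<longleftrightarrow> inf_preserves d P m x y"
    and "\<And>j. \<delta> c j = 0" and "\<And>i j. i < d \<Longrightarrow> \<delta> (k i) j = 0"
proof -
  define base where "base i = (\<lambda>j. P (k i) j - P c j)" for i
  define u where "u i = (\<lambda>j. m (k i) j - m c j)" for i
  have "dot d (u i) (base l) + dot d (u l) (base i) = 0" if "i < d" "l < d" for i l
  proof -
    have "dot d (\<lambda>j. u i j - u l j) (\<lambda>j. base i j - base l j) = 0"
      "dot d (u i) (base i) = 0" "dot d (u l) (base l) = 0"
      using body[of "k i" "k l"] body[of "k i" c] body[of "k l" c] k that c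
      unfolding inf_preserves_def u_def base_def by simp_all
    then show ?thesis
      by (simp add: dot_diff_left dot_diff_right dot_commute[of d "u l"])
  qed
  then obtain A where linear: "\<And>v w j. A (\<lambda>j. v j - w j) j = A v j - A w j"
    and A_base: "\<And>i j. i < d \<Longrightarrow> A (base i) j = u i j"
    and skew: "\<And>w. dot d (A w) w = 0"
    using exists_skew_map[of d base u] det unfolding base_def by blast
  show ?thesis
  proof
    let ?\<delta> = "\<lambda>v j. m v j - m c j - A (\<lambda>j. P v j - P c j) j"
    show "inf_preserves d P ?\<delta> x y \<longleftrightarrow> inf_preserves d P m x y" for x y
      by (rule inf_preserves_sub_skew[OF linear skew])
    show "?\<delta> c j = 0" for j
      using linear[of "P c" "P c" j] by simp
    show "?\<delta> (k i) j = 0" if "i < d" for i j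
      using A_base[OF that] unfolding base_def u_def by simp
  qed
qed

text \<open>The normalised motion is orthogonal to d independent directions at every vertex of C and
  at every attached vertex, hence vanishes there.\<close>
lemma inf_preserves_extend_from_body:
  fixes P m :: "'a \<Rightarrow> nat \<Rightarrow> real"
  assumes c: "c \<in> C" and k: "\<And>i. i < d \<Longrightarrow> k i \<in> C"
    and det: "Determinant.det (Matrix.mat d d (\<lambda>(i, j). P (k i) j - P c j)) \<noteq> 0"
    and body: "\<And>x y. x \<in> C \<Longrightarrow> y \<in> C \<Longrightarrow> inf_preserves d P m x y"
    and attached: "\<And>x. x \<in> V - C \<Longrightarrow> \<exists>kx. (\<forall>i<d. kx i \<in> C \<and> inf_preserves d P m x (kx i)) \<and>
                     Determinant.det (Matrix.mat d d (\<lambda>(i, j). P (kx i) j - P x j)) \<noteq> 0"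
    and a: "a \<in> C \<union> V" and b: "b \<in> C \<union> V"
  shows "inf_preserves d P m a b"
proof -
  obtain \<delta> where \<delta>_preserves: "\<And>x y. inf_preserves d P \<delta> x y \<longleftrightarrow> inf_preserves d P m x y"
    and \<delta>_c: "\<And>j. \<delta> c j = 0" and \<delta>_k: "\<And>i j. i < d \<Longrightarrow> \<delta> (k i) j = 0"
    using exists_normalised_inf_motion[OF c k det body] by blast
  have \<delta>_C: "\<delta> y j = 0" if y: "y \<in> C" and j: "j < d" for y j
  proof (rule dot_eq_0_det_nonzero[OF det _ j])
    fix i assume i: "i < d"
    have "inf_preserves d P \<delta> y c" "inf_preserves d P \<delta> y (k i)"
      using body[OF y c] body[OF y k[OF i]] \<delta>_preserves by blast+
    then have "(\<Sum>j<d. \<delta> y j * (P y j - P c j)) = 0" "(\<Sum>j<d. \<delta> y j * (P y j - P (k i) j)) = 0"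
      using \<delta>_c \<delta>_k[OF i] unfolding inf_preserves_def dot_def by simp_all
    moreover have "dot d (\<lambda>j. P (k i) j - P c j) (\<delta> y) =
        (\<Sum>j<d. \<delta> y j * (P y j - P c j)) - (\<Sum>j<d. \<delta> y j * (P y j - P (k i) j))"
      unfolding dot_def by (simp add: sum_subtractf[symmetric] algebra_simps)
    ultimately show "dot d (\<lambda>j. P (k i) j - P c j) (\<delta> y) = 0"
      by simp
  qed
  have \<delta>_V: "\<delta> x j = 0" if x: "x \<in> C \<union> V" and j: "j < d" for x j
  proof (cases "x \<in> C")
    case False
    then obtain kx where kx: "\<forall>i<d. kx i \<in> C \<and> inf_preserves d P m x (kx i)"
      and det_x: "Determinant.det (Matrix.mat d d (\<lambda>(i, j). P (kx i) j - P x j)) \<noteq> 0"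
      using attached x by blast
    show ?thesis
    proof (rule dot_eq_0_det_nonzero[OF det_x _ j])
      fix i assume i: "i < d"
      have "inf_preserves d P \<delta> x (kx i)"
        using kx i \<delta>_preserves by blast
      then have "(\<Sum>j<d. (\<delta> x j - \<delta> (kx i) j) * (P x j - P (kx i) j)) = 0"
        unfolding inf_preserves_def dot_def .
      then have "(\<Sum>j<d. \<delta> x j * (P x j - P (kx i) j)) = 0"
        using \<delta>_C kx i by simp
      moreover have "dot d (\<lambda>j. P (kx i) j - P x j) (\<delta> x) = - (\<Sum>j<d. \<delta> x j * (P x j - P (kx i) j))"
        unfolding dot_def by (simp add: sum_negf[symmetric] algebra_simps)
      ultimately show "dot d (\<lambda>j. P (kx i) j - P x j) (\<delta> x) = 0"
        by simp
    qed
  qed (use \<delta>_C j in blast)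
  have "inf_preserves d P \<delta> a b"
    using \<delta>_V a b unfolding inf_preserves_def dot_def by simp
  then show ?thesis
    using \<delta>_preserves by blast
qed

section \<open>Infinitesimal rigidity of the graph\<close>

lemma neighbourhoodD:
  assumes "simple_graph V E" "u \<in> neighbourhood V E w"
  shows "u \<in> V" "u \<noteq> w" "{u, w} \<in> E"
  using assms unfolding simple_graph_def neighbourhood_def by (auto simp: doubleton_eq_iff)

lemma card_common_neighbourhood:
  assumes sg: "simple_graph V E" and x: "x \<in> V" and w: "w \<in> V" and "x \<noteq> w" "{x, w} \<notin> E"
    and deg: "degree V E x + degree V E w + 2 \<ge> card V + d"
  shows "d \<le> card (neighbourhood V E x \<inter> neighbourhood V E w)"
proof -
  let ?Nx = "neighbourhood V E x" and ?Nw = "neighbourhood V E w"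
  have V: "finite V"
    using sg unfolding simple_graph_def by simp
  have "?Nx \<union> ?Nw \<subseteq> V - {x, w}"
  proof
    fix u assume u: "u \<in> ?Nx \<union> ?Nw"
    have "{w, x} \<notin> E"
      using \<open>{x, w} \<notin> E\<close> by (simp add: insert_commute)
    then show "u \<in> V - {x, w}"
      using u neighbourhoodD[OF sg, of u x] neighbourhoodD[OF sg, of u w] \<open>{x, w} \<notin> E\<close> by auto
  qed
  then have "card (?Nx \<union> ?Nw) \<le> card (V - {x, w})"
    using V by (intro card_mono) auto
  also have "\<dots> = card V - 2"
    using x w \<open>x \<noteq> w\<close> V by (simp add: card_Diff_subset)
  finally have "card (?Nx \<union> ?Nw) \<le> card V - 2" .
  moreover have "card ?Nx + card ?Nw = card (?Nx \<union> ?Nw) + card (?Nx \<inter> ?Nw)"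
    using V by (intro card_Un_Int) (auto simp: neighbourhood_def)
  moreover have "degree V E x = card ?Nx" "degree V E w = card ?Nw"
    unfolding degree_def neighbourhood_def by simp_all
  moreover have "card V \<ge> 2"
    using x w \<open>x \<noteq> w\<close> V by (metis card_2_iff card_mono empty_subsetI insert_subset)
  ultimately show ?thesis
    using deg by linarith
qed

lemma generic_det_nonzero:
  assumes gen: "generic d V p" and V: "finite V" and c: "c \<in> V"
    and k: "inj_on k {..<d}" "\<And>i. i < d \<Longrightarrow> k i \<in> V - {c}"
  shows "Determinant.det (Matrix.mat d d (\<lambda>(i, j). p (k i) j - p c j)) \<noteq> 0"
proof
  assume p: "Determinant.det (Matrix.mat d d (\<lambda>(i, j). p (k i) j - p c j)) = 0"
  have X: "finite (V \<times> {..<d})"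
    using V by simp
  have "rat_polynomial_fun (V \<times> {..<d})
          (\<lambda>q. Determinant.det (Matrix.mat d d (\<lambda>(i, j). q (k i) j - q c j)))"
    using k c by (intro rat_polynomial_fun_det[OF X] rat_polynomial_fun_diff rat_polynomial_fun_var[OF X]) auto
  have vanishes: "Determinant.det (Matrix.mat d d (\<lambda>(i, j). q (k i) j - q c j)) = 0" for q :: "'a \<Rightarrow> nat \<Rightarrow> real"
    using rat_polynomial_fun_generic_zero[OF gen \<open>rat_polynomial_fun _ _\<close>] p by simp
  define e :: "'a \<Rightarrow> nat \<Rightarrow> real" where "e v j = of_bool (\<exists>i<d. v = k i \<and> j = i)" for v j
  have "e (k i) j = of_bool (j = i)" if "i < d" "j < d" for i j
    using that k(1) unfolding e_def inj_on_def by auto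
  moreover have "e c j = 0" for j
    using k(2) unfolding e_def by fastforce
  ultimately have "Matrix.mat d d (\<lambda>(i, j). e (k i) j - e c j) = 1\<^sub>m d"
    by (intro eq_matI) auto
  then show False
    using vanishes[of e] by simp
qed

lemma exists_generic_common_neighbours:
  assumes sg: "simple_graph V E" and gen: "generic d V p"
    and x: "x \<in> V" and w: "w \<in> V" and "x \<noteq> w" "{x, w} \<notin> E"
    and "degree V E x + degree V E w + 2 \<ge> card V + d"
  obtains k where "\<And>i. i < d \<Longrightarrow> k i \<in> neighbourhood V E x \<inter> neighbourhood V E w"
    and "Determinant.det (Matrix.mat d d (\<lambda>(i, j). p (k i) j - p x j)) \<noteq> 0"
    and "Determinant.det (Matrix.mat d d (\<lambda>(i, j). p (k i) j - p w j)) \<noteq> 0"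
proof -
  have V: "finite V"
    using sg unfolding simple_graph_def by simp
  have "finite (neighbourhood V E x \<inter> neighbourhood V E w)"
    using V unfolding neighbourhood_def by simp
  then obtain k where "k ` {..<d} \<subseteq> neighbourhood V E x \<inter> neighbourhood V E w" "inj_on k {..<d}"
    using card_le_inj[of "{..<d}" "neighbourhood V E x \<inter> neighbourhood V E w"]
      card_common_neighbourhood[OF assms(1,3-)] by auto
  then have k: "inj_on k {..<d}" "\<And>i. i < d \<Longrightarrow> k i \<in> neighbourhood V E x \<inter> neighbourhood V E w"
    by auto
  have "k i \<in> V - {x}" "k i \<in> V - {w}" if "i < d" for i
    using neighbourhoodD[OF sg] k(2)[OF that] by blast+
  then show ?thesis
    using that k(2) generic_det_nonzero[OF gen V x k(1)] generic_det_nonzero[OF gen V w k(1)] by blast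
qed

lemma inf_preserves_from_closed_neighbourhood:
  assumes sg: "simple_graph V E"
    and deg: "\<forall>u\<in>V. \<forall>v\<in>V. u \<noteq> v \<and> {u, v} \<notin> E \<longrightarrow> degree V E u + degree V E v + 2 \<ge> card V + d"
    and w: "w \<in> V" and gen: "generic d V p"
    and edges: "\<And>x y. {x, y} \<in> E \<Longrightarrow> inf_preserves d p m x y"
    and nbrs: "\<And>x y. x \<in> neighbourhood V E w \<Longrightarrow> y \<in> neighbourhood V E w \<Longrightarrow> inf_preserves d p m x y"
    and a: "a \<in> V" and b: "b \<in> V"
  shows "inf_preserves d p m a b"
proof -
  let ?N = "neighbourhood V E w"
  let ?C = "insert w ?N"
  have V: "finite V"
    using sg unfolding simple_graph_def by simp
  have body: "inf_preserves d p m x y" if "x \<in> ?C" "y \<in> ?C" for x y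
    using that nbrs edges[of _ w] neighbourhoodD(3)[OF sg] inf_preserves_refl inf_preserves_commute
    by (metis insert_iff)
  have far: "x \<noteq> w" "{x, w} \<notin> E" "degree V E x + degree V E w + 2 \<ge> card V + d"
    if "x \<in> V - ?C" for x
    using that deg w unfolding neighbourhood_def by auto
  have attached: "\<exists>kx. (\<forall>i<d. kx i \<in> ?C \<and> inf_preserves d p m x (kx i)) \<and>
      Determinant.det (Matrix.mat d d (\<lambda>(i, j). p (kx i) j - p x j)) \<noteq> 0" if x: "x \<in> V - ?C" for x
  proof -
    obtain kx where kx: "\<And>i. i < d \<Longrightarrow> kx i \<in> neighbourhood V E x \<inter> ?N"
      and "Determinant.det (Matrix.mat d d (\<lambda>(i, j). p (kx i) j - p x j)) \<noteq> 0"
      using exists_generic_common_neighbours[OF sg gen _ w far[OF x]] x by blast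
    moreover have "inf_preserves d p m x (kx i)" if "i < d" for i
      using edges neighbourhoodD(3)[OF sg, of "kx i" x] kx[OF that] by (simp add: insert_commute)
    ultimately show ?thesis
      using kx by blast
  qed
  show ?thesis
  proof (cases "V \<subseteq> ?C")
    case True
    then show ?thesis
      using body a b by blast
  next
    case False
    then obtain x where x: "x \<in> V - ?C"
      by blast
    obtain k where k: "\<And>i. i < d \<Longrightarrow> k i \<in> neighbourhood V E x \<inter> ?N"
      and "Determinant.det (Matrix.mat d d (\<lambda>(i, j). p (k i) j - p x j)) \<noteq> 0"
      and det: "Determinant.det (Matrix.mat d d (\<lambda>(i, j). p (k i) j - p w j)) \<noteq> 0"
      using exists_generic_common_neighbours[OF sg gen _ w far[OF x]] x by blast
    have "k i \<in> ?C" if "i < d" for i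
      using k[OF that] by blast
    then show ?thesis
      using inf_preserves_extend_from_body[of w ?C d k p m V a b, OF _ _ det body attached] a b by blast
  qed
qed

lemma card_le_rig_rank:
  assumes "finite F" "F' \<subseteq> F" "rows_indep d p F'"
  shows "card F' \<le> rig_rank d p F"
  unfolding rig_rank_def using assms
  by (intro Max_ge) (auto intro: finite_subset[OF _ finite_Collect_subsets[of F]])

lemma exists_rig_rank_basis:
  assumes "finite F"
  obtains F0 where "F0 \<subseteq> F" "rows_indep d p F0" "card F0 = rig_rank d p F"
proof -
  have "{} \<in> {F'. F' \<subseteq> F \<and> rows_indep d p F'}"
    unfolding rows_indep_def by simp
  then have "rig_rank d p F \<in> card ` {F'. F' \<subseteq> F \<and> rows_indep d p F'}"
    unfolding rig_rank_def using assms
    by (intro Max_in) (auto intro: finite_subset[OF _ finite_Collect_subsets[of F]])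
  then show ?thesis
    using that by auto
qed

lemma inf_motion_rig_rank_basis:
  assumes F: "finite F" and F0: "F0 \<subseteq> F" "rows_indep d p F0" "card F0 = rig_rank d p F"
    and g: "rig_rank d p (insert g F) = rig_rank d p F" and m: "inf_motion d V p F0 m"
  shows "coord_inner V d m (rig_row d p g) = 0"
proof (cases "g \<in> F0")
  case True
  then show ?thesis
    using m unfolding inf_motion_def by blast
next
  case False
  have "\<not> rows_indep d p (insert g F0)"
  proof
    assume "rows_indep d p (insert g F0)"
    then have "card (insert g F0) \<le> rig_rank d p (insert g F)"
      using F F0(1) by (intro card_le_rig_rank) auto
    then show False
      using False F0 g finite_subset[OF F0(1) F] by simp
  qed
  then show ?thesis
    using inf_motion_dependent_row[OF F0(2) _ m] by blast
qed

text \<open>E0 is a basis of the generic rigidity matroid of the complete graph on V, i.e. the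
  framework (V, E0, p) is infinitesimally rigid.\<close>
definition max_indep_pairs :: "nat \<Rightarrow> 'a set \<Rightarrow> ('a \<Rightarrow> nat \<Rightarrow> real) \<Rightarrow> 'a set set \<Rightarrow> bool" where
  "max_indep_pairs d V p E0 \<longleftrightarrow> rows_indep d p E0 \<and>
     (\<forall>a\<in>V. \<forall>b\<in>V. a \<noteq> b \<longrightarrow> {a, b} \<notin> E0 \<longrightarrow> \<not> rows_indep d p (insert {a, b} E0))"

lemma inf_motion_rig_rank_basis_preserves:
  fixes V :: "'a set" and E :: "'a set set"
  assumes sg: "simple_graph V E"
    and deg: "\<forall>u\<in>V. \<forall>v\<in>V. u \<noteq> v \<and> {u, v} \<notin> E \<longrightarrow> degree V E u + degree V E v + 2 \<ge> card V + d"
    and w: "w \<in> V"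
    and linked: "\<forall>u\<in>neighbourhood V E w. \<forall>v\<in>neighbourhood V E w. u \<noteq> v \<and> {u, v} \<notin> E \<longrightarrow> R_linked d V E u v"
    and gen: "generic d V p"
    and E0: "E0 \<subseteq> E" "rows_indep d p E0" "card E0 = rig_rank d p E"
    and m: "inf_motion d V p E0 m" and "a \<in> V" "b \<in> V"
  shows "inf_preserves d p m a b"
proof (rule inf_preserves_from_closed_neighbourhood[OF sg deg w gen _ _ \<open>a \<in> V\<close> \<open>b \<in> V\<close>])
  have V: "finite V"
    using sg unfolding simple_graph_def by simp
  have E: "E \<subseteq> pairs V" "finite E"
    using simple_graph_edges_pairs[OF sg] finite_subset finite_pairs[OF V] by blast+
  have inner_zero: "coord_inner V d m (rig_row d p {x, y}) = 0"
    if "rig_rank d p (insert {x, y} E) = rig_rank d p E" for x y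
    by (rule inf_motion_rig_rank_basis[OF E(2) E0 that m])
  show edge: "inf_preserves d p m x y" if "{x, y} \<in> E" for x y
  proof -
    have "x \<in> V" "y \<in> V" "x \<noteq> y"
      using E(1) that by (auto elim!: pairsE simp: doubleton_eq_iff)
    then show ?thesis
      using inner_zero[of x y] that by (simp add: insert_absorb inf_preserves_iff_coord_inner[OF V])
  qed
  show "inf_preserves d p m x y" if "x \<in> neighbourhood V E w" "y \<in> neighbourhood V E w" for x y
  proof -
    have xy: "x \<in> V" "y \<in> V"
      using that neighbourhoodD[OF sg] by blast+
    consider "x = y" | "{x, y} \<in> E" | "x \<noteq> y" "{x, y} \<notin> E"
      by blast
    then show ?thesis
    proof cases
      case 3
      then have "rank_d d V (insert {x, y} E) = rank_d d V E"
        using linked that unfolding R_linked_def by blast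
      then have "rig_rank d p (insert {x, y} E) = rig_rank d p E"
        using E(1) pairsI[OF xy 3(1)] by (simp add: rank_d_eq_rig_rank[OF gen V])
      then show ?thesis
        using inner_zero 3 by (simp add: inf_preserves_iff_coord_inner[OF V xy])
    qed (simp_all add: inf_preserves_refl edge)
  qed
qed

lemma exists_max_indep_pairs_subgraph:
  fixes V :: "'a set" and E :: "'a set set"
  assumes sg: "simple_graph V E"
    and deg: "\<forall>u\<in>V. \<forall>v\<in>V. u \<noteq> v \<and> {u, v} \<notin> E \<longrightarrow> degree V E u + degree V E v + 2 \<ge> card V + d"
    and w: "w \<in> V"
    and linked: "\<forall>u\<in>neighbourhood V E w. \<forall>v\<in>neighbourhood V E w. u \<noteq> v \<and> {u, v} \<notin> E \<longrightarrow> R_linked d V E u v"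
    and gen: "generic d V p"
  obtains E0 where "E0 \<subseteq> E" "max_indep_pairs d V p E0"
proof -
  have V: "finite V"
    using sg unfolding simple_graph_def by simp
  have E: "E \<subseteq> pairs V" "finite E"
    using simple_graph_edges_pairs[OF sg] finite_subset finite_pairs[OF V] by blast+
  obtain E0 where E0: "E0 \<subseteq> E" "rows_indep d p E0" "card E0 = rig_rank d p E"
    using exists_rig_rank_basis[OF E(2)] by blast
  have "\<not> rows_indep d p (insert {a, b} E0)"
    if ab: "a \<in> V" "b \<in> V" "a \<noteq> b" "{a, b} \<notin> E0" for a b
  proof
    assume indep: "rows_indep d p (insert {a, b} E0)"
    have "insert {a, b} E0 \<subseteq> pairs V"
      using E0(1) E(1) pairsI[OF ab(1-3)] by blast
    then obtain m where "inf_motion d V p E0 m" "coord_inner V d m (rig_row d p {a, b}) \<noteq> 0"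
      using exists_inf_motion_off_row[OF V _ indep, of "{a, b}"] ab(4) by auto
    then show False
      using inf_motion_rig_rank_basis_preserves[OF sg deg w linked gen E0, of m a b] ab
        inf_preserves_iff_coord_inner[OF V ab(1-3)] by blast
  qed
  then have "max_indep_pairs d V p E0"
    unfolding max_indep_pairs_def using E0(2) by blast
  with E0(1) show ?thesis
    by (rule that)
qed

section \<open>From infinitesimal to continuous rigidity\<close>

lemma sqdist_diff_eq_dot_midpoint:
  "dot d (\<lambda>j. (x j - x' j) - (y j - y' j)) (\<lambda>j. (x j + x' j) / 2 - (y j + y' j) / 2) =
     (sqdist d x y - sqdist d x' y') / 2"
proof -
  have "(sqdist d x y - sqdist d x' y') / 2 = (\<Sum>j<d. ((x j - y j)\<^sup>2 - (x' j - y' j)\<^sup>2) / 2)"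
    unfolding sqdist_def by (simp only: sum_divide_distrib[symmetric] sum_subtractf)
  also have "\<dots> = dot d (\<lambda>j. (x j - x' j) - (y j - y' j)) (\<lambda>j. (x j + x' j) / 2 - (y j + y' j) / 2)"
    unfolding dot_def by (rule sum.cong) (simp_all add: field_simps power2_eq_square)
  finally show ?thesis
    by simp
qed

lemma sqdist_self: "sqdist d x x = 0"
  unfolding sqdist_def by simp

lemma max_indep_pairs_dependent:
  assumes "generic d V p" "finite V" "E0 \<subseteq> pairs V" "max_indep_pairs d V p E0"
    and "a \<in> V" "b \<in> V" "a \<noteq> b" "{a, b} \<notin> E0"
  shows "\<not> rows_indep d r (insert {a, b} E0)"
  using rows_indep_generic[OF assms(1,2), of "insert {a, b} E0" r] assms(3-8) pairsI[OF assms(5-7)]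
  unfolding max_indep_pairs_def by blast

text \<open>Averaging trick: if Q has the E0-edge lengths of r, then Q - r is an infinitesimal motion of
  the midpoint framework (Q + r) / 2.\<close>
lemma congruent_on_if_midpoint_indep:
  assumes gen: "generic d V p" and V: "finite V" and E0: "E0 \<subseteq> pairs V"
    and basis: "max_indep_pairs d V p E0"
    and indep: "rows_indep d (\<lambda>x j. (Q x j + r x j) / 2) E0"
    and edges: "\<forall>a\<in>V. \<forall>b\<in>V. {a, b} \<in> E0 \<longrightarrow> sqdist d (Q a) (Q b) = sqdist d (r a) (r b)"
  shows "congruent_on d V Q r"
proof -
  let ?M = "\<lambda>x j. (Q x j + r x j) / 2"
  have inner: "coord_inner V d (\<lambda>x j. Q x j - r x j) (rig_row d ?M {a, b}) =
      (sqdist d (Q a) (Q b) - sqdist d (r a) (r b)) / 2" if "a \<in> V" "b \<in> V" "a \<noteq> b" for a b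
    using that by (simp add: coord_inner_rig_row[OF V] sqdist_diff_eq_dot_midpoint)
  have motion: "inf_motion d V ?M E0 (\<lambda>x j. Q x j - r x j)"
    unfolding inf_motion_def
  proof
    fix f assume "f \<in> E0"
    then obtain a b where ab: "f = {a, b}" "a \<in> V" "b \<in> V" "a \<noteq> b"
      using E0 by (blast elim: pairsE)
    then have "sqdist d (Q a) (Q b) = sqdist d (r a) (r b)"
      using edges \<open>f \<in> E0\<close> by blast
    then show "coord_inner V d (\<lambda>x j. Q x j - r x j) (rig_row d ?M f) = 0"
      using inner[OF ab(2-4)] ab(1) by simp
  qed
  show ?thesis
    unfolding congruent_on_def
  proof (intro ballI)
    fix a b assume ab: "a \<in> V" "b \<in> V"
    consider "a = b" | "{a, b} \<in> E0" | "a \<noteq> b" "{a, b} \<notin> E0"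
      by blast
    then show "sqdist d (Q a) (Q b) = sqdist d (r a) (r b)"
    proof cases
      case 3
      then show ?thesis
        using inf_motion_dependent_row[OF indep max_indep_pairs_dependent[OF gen V E0 basis ab 3] motion]
          inner[OF ab 3(1)] by simp
    qed (use edges ab in \<open>simp_all add: sqdist_self\<close>)
  qed
qed

lemma eventually_congruent_on:
  fixes Q :: "'b \<Rightarrow> 'a \<Rightarrow> nat \<Rightarrow> real"
  assumes gen: "generic d V p" and V: "finite V" and E0: "E0 \<subseteq> pairs V"
    and basis: "max_indep_pairs d V p E0" and r: "congruent_on d V r p"
    and lim: "\<And>x j. x \<in> V \<Longrightarrow> j < d \<Longrightarrow> ((\<lambda>s. Q s x j) \<longlongrightarrow> r x j) F"
    and edges: "eventually (\<lambda>s. \<forall>a\<in>V. \<forall>b\<in>V. {a, b} \<in> E0 \<longrightarrow>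
                  sqdist d (Q s a) (Q s b) = sqdist d (r a) (r b)) F"
  shows "eventually (\<lambda>s. congruent_on d V (Q s) r) F"
proof -
  obtain h where h: "bij_betw h {0..<card E0} E0"
    using ex_bij_betw_nat_finite finite_subset[OF E0 finite_pairs[OF V]] by blast
  let ?det = "\<lambda>q. Determinant.det (gram_mat V d (\<lambda>i. rig_row d q (h i)) (card E0))"
  define M where "M s = (\<lambda>x j. (Q s x j + r x j) / 2)" for s
  have "rows_indep d r E0"
    using basis rows_indep_congruent[OF V r E0] unfolding max_indep_pairs_def by blast
  then have "?det r \<noteq> 0"
    using rows_indep_iff_det_gram[OF V E0 h] by blast
  moreover have "((\<lambda>s. ?det (M s)) \<longlongrightarrow> ?det r) F"
  proof (rule tendsto_rat_polynomial_fun[OF rat_polynomial_fun_det_gram[OF V]])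
    show "h i \<in> pairs V" if "i < card E0" for i
      using h E0 that by (meson atLeastLessThan_iff bij_betwE subsetD zero_le)
    show "((\<lambda>s. M s x j) \<longlongrightarrow> r x j) F" if "(x, j) \<in> V \<times> {..<d}" for x j
    proof -
      have "((\<lambda>s. (Q s x j + r x j) / 2) \<longlongrightarrow> (r x j + r x j) / 2) F"
        using that by (intro tendsto_intros lim) auto
      then show ?thesis
        unfolding M_def by simp
    qed
  qed
  ultimately have "eventually (\<lambda>s. ?det (M s) \<noteq> 0) F"
    by (intro tendsto_imp_eventually_ne)
  with edges show ?thesis
  proof eventually_elim
    case (elim s)
    then have "rows_indep d (M s) E0"
      using rows_indep_iff_det_gram[OF V E0 h] by blast
    then show ?case
      using congruent_on_if_midpoint_indep[OF gen V E0 basis _ elim(1)] unfolding M_def by blast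
  qed
qed

lemma flexible_framework_mono:
  "E0 \<subseteq> E \<Longrightarrow> flexible_framework d V E p \<Longrightarrow> flexible_framework d V E0 p"
  unfolding flexible_framework_def by blast

lemma closedin_congruent_times:
  assumes V: "finite V" and cont: "\<forall>v\<in>V. \<forall>i<d. continuous_on {0..1} (\<lambda>t. q t v i)"
  shows "closedin (top_of_set {0..1}) {t \<in> {0..1::real}. congruent_on d V (q t) p}"
proof -
  define defect where
    "defect t = (\<Sum>a\<in>V. \<Sum>b\<in>V. (sqdist d (q t a) (q t b) - sqdist d (p a) (p b))\<^sup>2)" for t
  have "congruent_on d V (q t) p \<longleftrightarrow> defect t = 0" for t
    unfolding congruent_on_def defect_def using V by (simp add: sum_nonneg_eq_0_iff sum_nonneg)
  moreover have "continuous_on {0..1} defect"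
    unfolding defect_def sqdist_def using cont by (intro continuous_intros) auto
  ultimately show ?thesis
    using continuous_closedin_preimage_constant[of "{0..1}" defect 0] by simp
qed

lemma openin_congruent_times:
  fixes q :: "real \<Rightarrow> 'a \<Rightarrow> nat \<Rightarrow> real"
  assumes gen: "generic d V p" and V: "finite V" and E0: "E0 \<subseteq> pairs V"
    and basis: "max_indep_pairs d V p E0"
    and cont: "\<forall>v\<in>V. \<forall>i<d. continuous_on {0..1} (\<lambda>t. q t v i)"
    and edges: "\<forall>t\<in>{0..1}. \<forall>u\<in>V. \<forall>v\<in>V. {u, v} \<in> E0 \<longrightarrow> sqdist d (q t u) (q t v) = sqdist d (p u) (p v)"
  shows "openin (top_of_set {0..1}) {t \<in> {0..1}. congruent_on d V (q t) p}"
  unfolding openin_euclidean_subtopology_iff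
proof (intro conjI ballI)
  fix t assume t: "t \<in> {t \<in> {0..1}. congruent_on d V (q t) p}"
  have "eventually (\<lambda>s. congruent_on d V (q s) (q t)) (at t within {0..1})"
  proof (rule eventually_congruent_on[OF gen V E0 basis])
    show "congruent_on d V (q t) p"
      using t by blast
    show "((\<lambda>s. q s x j) \<longlongrightarrow> q t x j) (at t within {0..1})" if "x \<in> V" "j < d" for x j
      using cont that t unfolding continuous_on_def by blast
    show "eventually (\<lambda>s. \<forall>a\<in>V. \<forall>b\<in>V. {a, b} \<in> E0 \<longrightarrow>
            sqdist d (q s a) (q s b) = sqdist d (q t a) (q t b)) (at t within {0..1})"
      using edges t unfolding eventually_at_filter congruent_on_def by (simp add: always_eventually)
  qed
  then obtain e where "e > 0"
    and near: "\<And>s. s \<in> {0..1} \<Longrightarrow> s \<noteq> t \<Longrightarrow> dist s t < e \<Longrightarrow> congruent_on d V (q s) (q t)"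
    unfolding eventually_at by blast
  have "congruent_on d V (q s) p" if "s \<in> {0..1}" "dist s t < e" for s
    using near[OF that(1) _ that(2)] t unfolding congruent_on_def by (cases "s = t") auto
  with \<open>e > 0\<close> show "\<exists>e>0. \<forall>s\<in>{0..1}. dist s t < e \<longrightarrow> s \<in> {t \<in> {0..1}. congruent_on d V (q t) p}"
    by blast
qed blast

lemma not_flexible_if_max_indep_pairs:
  assumes gen: "generic d V p" and V: "finite V" and E0: "E0 \<subseteq> pairs V"
    and basis: "max_indep_pairs d V p E0"
  shows "\<not> flexible_framework d V E0 p"
proof
  assume "flexible_framework d V E0 p"
  then obtain q :: "real \<Rightarrow> 'a \<Rightarrow> nat \<Rightarrow> real"
    where cont: "\<forall>v\<in>V. \<forall>i<d. continuous_on {0..1} (\<lambda>t. q t v i)"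
      and init: "\<forall>v\<in>V. \<forall>i<d. q 0 v i = p v i"
      and edges: "\<forall>t\<in>{0..1}. \<forall>u\<in>V. \<forall>v\<in>V. {u, v} \<in> E0 \<longrightarrow> sqdist d (q t u) (q t v) = sqdist d (p u) (p v)"
      and moved: "\<exists>t\<in>{0..1}. \<exists>u\<in>V. \<exists>v\<in>V. sqdist d (q t u) (q t v) \<noteq> sqdist d (p u) (p v)"
    unfolding flexible_framework_def by blast
  let ?S = "{t \<in> {0..1::real}. congruent_on d V (q t) p}"
  have "0 \<in> ?S"
    using init unfolding congruent_on_def sqdist_def by (auto intro!: sum.cong)
  then have "?S = {0..1}"
    using connected_clopen[of "{0..1::real}", THEN iffD1, OF connected_Icc]
      openin_congruent_times[OF gen V E0 basis cont edges] closedin_congruent_times[OF V cont] by blast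
  then show False
    using moved unfolding congruent_on_def by blast
qed

theorem lemma4p1:
  fixes V :: "'a set" and E :: "'a set set" and d :: nat
  assumes "simple_graph V E"
    and "\<forall>u\<in>V. \<forall>v\<in>V. u \<noteq> v \<and> {u, v} \<notin> E \<longrightarrow>
           degree V E u + degree V E v + 2 \<ge> card V + d"
    and "\<exists>w\<in>V. \<forall>u\<in>neighbourhood V E w. \<forall>v\<in>neighbourhood V E w.
           u \<noteq> v \<and> {u, v} \<notin> E \<longrightarrow> R_linked d V E u v"
  shows "rigid d V E"
  unfolding rigid_def
proof (intro allI impI)
  fix p assume gen: "generic d V p"
  obtain w where w: "w \<in> V" and linked: "\<forall>u\<in>neighbourhood V E w. \<forall>v\<in>neighbourhood V E w.
      u \<noteq> v \<and> {u, v} \<notin> E \<longrightarrow> R_linked d V E u v"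
    using assms(3) by blast
  obtain E0 where E0: "E0 \<subseteq> E" "max_indep_pairs d V p E0"
    using exists_max_indep_pairs_subgraph[OF assms(1,2) w linked gen] by blast
  have "finite V" "E0 \<subseteq> pairs V"
    using assms(1) simple_graph_edges_pairs[OF assms(1)] E0(1) unfolding simple_graph_def by auto
  then have "\<not> flexible_framework d V E0 p"
    using not_flexible_if_max_indep_pairs[OF gen _ _ E0(2)] by blast
  then show "\<not> flexible_framework d V E p"
    using flexible_framework_mono[OF E0(1)] by blast
qed

end
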